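(* Let $\Psi:\mathbb{R}\to\mathrm{Sp}(\mathbb{R}^2)$ be smooth with $\Psi(0)=\mathbb{1}$, $\Psi(t+T)=\Psi(t)\Psi(T)$, $\Psi(-t)=I\Psi(t)I$ for all $t$, and assume $\det(\Psi(T)-\mathbb{1})\ne0$. Then $$\big|\mu_{CZ}(\Psi|_{[0,T]})-2\mu_{RS}(\Psi|_{[0,T/2]}\mathbb{R},\mathbb{R})\big|\le1.$$ In particular, if $\mu_{CZ}(\Psi|_{[0,T]})\ge3$ then $\mu_{RS}(\Psi|_{[0,T/2]}\mathbb{R},\mathbb{R})\ge \tfrac32$. *)

theory Defs
  imports "HOL-Analysis.Analysis"
begin

text \<open>Real 2x2 matrices acting on R^2 = real^2. Standard complex structure J0
  (counterclockwise rotation by pi/2) and the anti-symplectic reflection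
  I = diag(1,-1), (x,y) maps to (x,-y), which fixes the Lagrangian line R = R x 0.\<close>

definition J0 :: "real^2^2" where
  "J0 = (\<chi> i j. if i = 1 \<and> j = 2 then -1 else if i = 2 \<and> j = 1 then 1 else 0)"

definition Irefl :: "real^2^2" where
  "Irefl = (\<chi> i j. if i = 1 \<and> j = 1 then 1 else if i = 2 \<and> j = 2 then -1 else 0)"

definition symplectic2 :: "real^2^2 \<Rightarrow> bool" where
  "symplectic2 A \<longleftrightarrow> transpose A ** J0 ** A = J0"

definition smooth_fun :: "(real \<Rightarrow> real) \<Rightarrow> bool" where
  "smooth_fun f \<longleftrightarrow> (\<exists>D. D 0 = f \<and> (\<forall>n x. (D n has_real_derivative D (Suc n) x) (at x)))"

definition smooth_matrix_path :: "(real \<Rightarrow> real^2^2) \<Rightarrow> bool" where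
  "smooth_matrix_path \<Psi> \<longleftrightarrow> (\<forall>i j. smooth_fun (\<lambda>t. \<Psi> t $ i $ j))"

definition unitvec :: "real \<Rightarrow> real^2" where
  "unitvec th = (\<chi> i. if i = 1 then cos th else sin th)"

definition angle_lift :: "(real \<Rightarrow> real^2^2) \<Rightarrow> real^2 \<Rightarrow> real \<Rightarrow> real \<Rightarrow> (real \<Rightarrow> real) \<Rightarrow> bool" where
  "angle_lift \<Psi> v a b th \<longleftrightarrow> continuous_on {a..b} th \<and>
     (\<forall>t\<in>{a..b}. \<Psi> t *v v = norm (\<Psi> t *v v) *\<^sub>R unitvec (th t))"

definition angle_change :: "(real \<Rightarrow> real^2^2) \<Rightarrow> real^2 \<Rightarrow> real \<Rightarrow> real \<Rightarrow> real" where
  "angle_change \<Psi> v a b = (THE d. \<exists>th. angle_lift \<Psi> v a b th \<and> d = th b - th a)"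

text \<open>Conley-Zehnder index of a path in Sp(2) starting at the identity with nondegenerate
  endpoint (Hofer-Wysocki-Zehnder winding-interval description): the windings
  angle_change/(2 pi) over all v /= 0 form an interval of length < 1/2; if it contains an
  integer k the index is 2k, otherwise it lies in (k,k+1) and the index is 2k+1.
  Normalisation: mu_CZ(rotation e^{J0 t}, t in [0,T]) = 2 floor(T/2pi) + 1.\<close>
definition windings :: "(real \<Rightarrow> real^2^2) \<Rightarrow> real \<Rightarrow> real set" where
  "windings \<Psi> T = {angle_change \<Psi> v 0 T / (2 * pi) | v. v \<noteq> 0}"

definition mu_CZ :: "(real \<Rightarrow> real^2^2) \<Rightarrow> real \<Rightarrow> int" where
  "mu_CZ \<Psi> T =
     (if \<exists>k::int. of_int k \<in> windings \<Psi> T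
      then 2 * (THE k::int. of_int k \<in> windings \<Psi> T)
      else 2 * \<lfloor>SOME w. w \<in> windings \<Psi> T\<rfloor> + 1)"

text \<open>Robbin-Salamon index of a path of lines Lambda(t) (in R^2) relative to the line R = R x 0,
  computed from a continuous angle lift th of Lambda: each passage of th through a multiple of
  pi counts +1 (counterclockwise) or -1, endpoint crossings count 1/2.
  rs_step x = (floor(x/pi) + ceiling(x/pi))/2.\<close>
definition rs_step :: "real \<Rightarrow> real" where
  "rs_step x = (of_int \<lfloor>x / pi\<rfloor> + of_int \<lceil>x / pi\<rceil>) / 2"

text \<open>mu_RS(Psi|[a,b] R, R): the line Psi(t) R is spanned by Psi(t) e1.\<close>
definition mu_RS_R :: "(real \<Rightarrow> real^2^2) \<Rightarrow> real \<Rightarrow> real \<Rightarrow> real" where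
  "mu_RS_R \<Psi> a b = (THE r. \<exists>th. angle_lift \<Psi> (axis 1 1) a b th \<and>
                          r = rs_step (th b) - rs_step (th a))"

end

theory Submission
  imports Defs
begin

text \<open>Let Theta(t, phi) be the continuous angle of Psi(t) (cos phi, sin phi) with Theta(0, phi) = phi.
  For fixed t, phi \<mapsto> Theta(t, phi) is a strictly increasing lift of a circle map, so the windings
  (Theta(T, phi) - phi) / 2pi of Psi on [0, T] form a connected set of diameter less than 1, while
  mu_RS of Psi on [0, T/2] is read off from Theta(T/2, 0). The loop property and the reflection
  symmetry give Theta(T/2, -Theta(T, 0)) = -Theta(T/2, 0), and by monotonicity Theta(T/2, 0) / pi and
  the winding x = Theta(T, 0) / 2pi then lie in the same cell of the integer lattice: they are the
  same integer, or both lie in the same open interval (k, k + 1). Hence 2 mu_RS = floor x + ceiling x,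
  and mu_CZ differs from this by at most one, with equality when x is an integer.\<close>

lemma vec2_eq_iff: "(x::real^2) = y \<longleftrightarrow> x$1 = y$1 \<and> x$2 = y$2"
  by (simp add: vec_eq_iff forall_2)

lemma norm_vec2: "norm (x::real^2) = sqrt ((x$1)\<^sup>2 + (x$2)\<^sup>2)"
  by (simp add: norm_vec_def L2_set_def sum_2)

lemma unitvec_nth [simp]: "unitvec \<theta> $ 1 = cos \<theta>" "unitvec \<theta> $ 2 = sin \<theta>"
  by (simp_all add: unitvec_def)

lemma norm_unitvec [simp]: "norm (unitvec \<theta>) = 1"
  by (simp add: norm_vec2)

lemma unitvec_nonzero [simp]: "unitvec \<theta> \<noteq> 0"
  using norm_unitvec[of \<theta>] by force

lemma sgn_unitvec [simp]: "sgn (unitvec \<theta>) = unitvec \<theta>"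
  by (simp add: sgn_div_norm)

lemma unitvec_eq_iff: "unitvec a = unitvec b \<longleftrightarrow> (\<exists>m::int. a = b + 2*pi*m)"
  using sin_cos_eq_iff[of a b] by (auto simp: vec2_eq_iff)

lemma unitvec_add_2pi_multiple [simp]: "unitvec (a + 2*pi * of_int m) = unitvec a"
  by (auto simp: unitvec_eq_iff)

lemma sgn_eq_unitvec:
  assumes "(v::real^2) \<noteq> 0"
  obtains \<phi> where "sgn v = unitvec \<phi>"
proof -
  have "(sgn v $ 1)\<^sup>2 + (sgn v $ 2)\<^sup>2 = 1"
    using assms norm_sgn[of v] by (simp add: norm_vec2)
  then obtain \<phi> where "sgn v $ 1 = cos \<phi>" "sgn v $ 2 = sin \<phi>"
    by (rule sincos_total_2pi)
  then show ?thesis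
    using that by (simp add: vec2_eq_iff)
qed

lemma eq_norm_scaleR_unitvec_iff:
  assumes "(x::real^2) \<noteq> 0"
  shows "x = norm x *\<^sub>R unitvec \<theta> \<longleftrightarrow> unitvec \<theta> = sgn x"
  using assms by (metis divideR_right norm_eq_zero sgn_div_norm)

lemma Irefl_unitvec: "Irefl *v unitvec \<theta> = unitvec (- \<theta>)"
  by (simp add: vec2_eq_iff Irefl_def matrix_vector_mult_def sum_2)

lemma sgn_Irefl: "sgn (Irefl *v x) = Irefl *v sgn x"
proof -
  have "norm (Irefl *v x) = norm x"
    by (simp add: norm_vec2 Irefl_def matrix_vector_mult_def sum_2)
  then show ?thesis
    by (simp add: sgn_div_norm matrix_vector_mult_scaleR)
qed

lemma det_symplectic2: "symplectic2 A \<Longrightarrow> det A = 1"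
  unfolding symplectic2_def
  by (drule arg_cong[where f = "\<lambda>M. M $ 1 $ 2"])
     (simp add: matrix_matrix_mult_def sum_2 transpose_def J0_def det_2 algebra_simps)

lemma continuous_angles_diff_constant:
  fixes f g :: "'a::topological_space \<Rightarrow> real"
  assumes "connected S" "continuous_on S f" "continuous_on S g"
    and same_direction: "\<And>x. x \<in> S \<Longrightarrow> unitvec (f x) = unitvec (g x)"
    and "x \<in> S" "y \<in> S"
  shows "f x - g x = f y - g y"
proof -
  have "(\<lambda>x. f x - g x) constant_on S"
  proof (rule continuous_discrete_range_constant)
    show "continuous_on S (\<lambda>x. f x - g x)"
      by (intro continuous_intros assms)
    fix x assume "x \<in> S"
    show "\<exists>e>0. \<forall>y. y \<in> S \<and> f y - g y \<noteq> f x - g x \<longrightarrow> e \<le> norm (f y - g y - (f x - g x))"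
    proof (intro exI[of _ "2*pi"] conjI allI impI)
      fix y assume y: "y \<in> S \<and> f y - g y \<noteq> f x - g x"
      obtain m n :: int where "f x = g x + 2*pi*m" "f y = g y + 2*pi*n"
        using same_direction[OF \<open>x \<in> S\<close>] same_direction[of y] y by (auto simp: unitvec_eq_iff)
      moreover from this have "1 \<le> \<bar>real_of_int n - real_of_int m\<bar>"
        using y by auto
      ultimately show "2*pi \<le> norm (f y - g y - (f x - g x))"
        by (simp add: abs_mult flip: right_diff_distrib)
    qed simp
  qed fact
  then show ?thesis
    using assms by (auto simp: constant_on_def)
qed

lemma continuous_inj_lift_imp_strict_mono:
  fixes f :: "real \<Rightarrow> real"
  assumes "continuous_on UNIV f" "inj f" and lift: "\<And>x. f (x + 2*pi) = f x + 2*pi"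
  shows "strict_mono f"
proof (rule strict_monoI)
  fix x y :: real assume "x < y"
  have "y < y + 2*pi" by simp
  from continuous_inj_imp_mono[OF \<open>x < y\<close> this
      continuous_on_subset[OF assms(1)] inj_on_subset[OF assms(2)]]
  show "f x < f y"
    using lift[of y] by auto
qed

lemma lift_displacement_diff_less:
  fixes f :: "real \<Rightarrow> real"
  assumes mono: "strict_mono f" and lift: "\<And>x m. f (x + 2*pi * of_int m) = f x + 2*pi * of_int m"
  shows "\<bar>(f a - a) - (f b - b)\<bar> < 2*pi"
proof -
  define m where "m = \<lfloor>(b - a) / (2*pi)\<rfloor>"
  define b' where "b' = b - 2*pi*m"
  have "of_int m \<le> (b - a) / (2*pi)" "(b - a) / (2*pi) < of_int m + 1"
    unfolding m_def by linarith+
  then have "a \<le> b'" "b' < a + 2*pi"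
    by (simp_all add: b'_def field_simps)
  then have "f a \<le> f b'" "f b' < f (a + 2*pi)"
    using strict_mono_less_eq[OF mono] strict_mono_less[OF mono] by auto
  moreover have "f (a + 2*pi) = f a + 2*pi"
    using lift[of a 1] by simp
  moreover have "f b = f b' + 2*pi*m"
    using lift[of b' m] by (simp add: b'_def)
  ultimately show ?thesis
    using \<open>a \<le> b'\<close> \<open>b' < a + 2*pi\<close> by (simp add: b'_def)
qed

text \<open>Since g(-2 pi k) = g(0) - 2 pi k, comparing g(0) with k pi amounts to comparing
  g(-F) = -g(0) with g(-2 pi k), that is, -F with -2 pi k.\<close>

lemma odd_lift_same_integer_comparisons:
  fixes g :: "real \<Rightarrow> real"
  assumes mono: "strict_mono g" and lift: "\<And>x m. g (x + 2*pi * of_int m) = g x + 2*pi * of_int m"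
    and odd: "g (- F) = - g 0"
  shows "of_int k \<le> g 0 / pi \<longleftrightarrow> of_int k \<le> F / (2*pi)"
    and "of_int k < g 0 / pi \<longleftrightarrow> of_int k < F / (2*pi)"
proof -
  have g_k: "g (- 2*pi*k) = g 0 - 2*pi*k"
    using lift[of 0 "-k"] by simp
  have "of_int k \<le> g 0 / pi \<longleftrightarrow> g (- F) \<le> g (- 2*pi*k)"
    unfolding g_k odd by (simp add: field_simps)
  also have "\<dots> \<longleftrightarrow> of_int k \<le> F / (2*pi)"
    by (simp add: strict_mono_less_eq[OF mono] field_simps)
  finally show "of_int k \<le> g 0 / pi \<longleftrightarrow> of_int k \<le> F / (2*pi)" .
  have "of_int k < g 0 / pi \<longleftrightarrow> g (- F) < g (- 2*pi*k)"
    unfolding g_k odd by (simp add: field_simps)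
  also have "\<dots> \<longleftrightarrow> of_int k < F / (2*pi)"
    by (simp add: strict_mono_less[OF mono] field_simps)
  finally show "of_int k < g 0 / pi \<longleftrightarrow> of_int k < F / (2*pi)" .
qed

lemma floor_ceiling_eq_if_same_integer_comparisons:
  fixes x y :: real
  assumes "\<And>k::int. of_int k \<le> x \<longleftrightarrow> of_int k \<le> y" "\<And>k::int. of_int k < x \<longleftrightarrow> of_int k < y"
  shows "\<lfloor>x\<rfloor> = \<lfloor>y\<rfloor>" "\<lceil>x\<rceil> = \<lceil>y\<rceil>"
proof -
  show "\<lfloor>x\<rfloor> = \<lfloor>y\<rfloor>"
    by (metis antisym assms(1) le_floor_iff order_refl)
  show "\<lceil>x\<rceil> = \<lceil>y\<rceil>"
    by (metis antisym assms(2) ceiling_le_iff not_le order_refl)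
qed

lemma rs_step_add_2pi_multiple: "rs_step (x + 2*pi * of_int m) = rs_step x + 2 * of_int m"
proof -
  have shift: "(x + 2*pi * of_int m) / pi = x / pi + of_int (2*m)"
    by (simp add: field_simps)
  show ?thesis
    unfolding rs_step_def shift floor_add_int ceiling_add_of_int by simp
qed

lemma rs_step_0 [simp]: "rs_step 0 = 0"
  by (simp add: rs_step_def)

lemma rs_step_odd_lift:
  fixes g :: "real \<Rightarrow> real"
  assumes "strict_mono g" "\<And>x m. g (x + 2*pi * of_int m) = g x + 2*pi * of_int m"
    and "g (- F) = - g 0"
  shows "rs_step (g 0) = (\<lfloor>F / (2*pi)\<rfloor> + \<lceil>F / (2*pi)\<rceil>) / 2"
  using floor_ceiling_eq_if_same_integer_comparisons[OF odd_lift_same_integer_comparisons[OF assms]]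
  by (simp add: rs_step_def)

lemma mu_CZ_eq_double:
  assumes close: "\<And>x y. x \<in> windings \<Psi> T \<Longrightarrow> y \<in> windings \<Psi> T \<Longrightarrow> \<bar>x - y\<bar> < 1"
    and "of_int j \<in> windings \<Psi> T"
  shows "mu_CZ \<Psi> T = 2 * j"
proof -
  have "(THE k::int. of_int k \<in> windings \<Psi> T) = j"
  proof (rule the_equality)
    fix k :: int assume "of_int k \<in> windings \<Psi> T"
    then have "\<bar>of_int k - of_int j\<bar> < (1::real)"
      using close assms(2) by blast
    then show "k = j" by linarith
  qed fact
  then show ?thesis
    using assms(2) by (auto simp: mu_CZ_def)
qed

lemma mu_CZ_cases:
  assumes conn: "connected (windings \<Psi> T)"
    and close: "\<And>x y. x \<in> windings \<Psi> T \<Longrightarrow> y \<in> windings \<Psi> T \<Longrightarrow> \<bar>x - y\<bar> < 1"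
    and x: "x \<in> windings \<Psi> T"
  shows "x \<in> \<int> \<and> mu_CZ \<Psi> T = 2 * \<lfloor>x\<rfloor>
    \<or> x \<notin> \<int> \<and> mu_CZ \<Psi> T \<in> {2 * \<lfloor>x\<rfloor>, 2 * \<lfloor>x\<rfloor> + 1, 2 * \<lfloor>x\<rfloor> + 2}"
proof (cases "\<exists>j::int. of_int j \<in> windings \<Psi> T")
  case True
  then obtain j :: int where j: "of_int j \<in> windings \<Psi> T" by blast
  have "\<bar>of_int j - x\<bar> < 1"
    using close[OF j x] .
  moreover have "x \<notin> \<int> \<Longrightarrow> of_int \<lfloor>x\<rfloor> < x"
    by (metis Ints_of_int of_int_floor_le order_le_less)
  ultimately have "x \<in> \<int> \<and> j = \<lfloor>x\<rfloor> \<or> x \<notin> \<int> \<and> j \<in> {\<lfloor>x\<rfloor>, \<lfloor>x\<rfloor> + 1}"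
    by (auto elim!: Ints_cases) linarith+
  then show ?thesis
    using mu_CZ_eq_double[OF close j] by auto
next
  case False
  define s where "s = (SOME w. w \<in> windings \<Psi> T)"
  have s: "s \<in> windings \<Psi> T"
    unfolding s_def using x by (rule someI)
  have no_int_between: "\<not> (a \<le> of_int k \<and> of_int k \<le> b)"
    if "a \<in> windings \<Psi> T" "b \<in> windings \<Psi> T" for a b and k :: int
    using connectedD_interval[OF conn that] False by blast
  have "\<lfloor>s\<rfloor> = \<lfloor>x\<rfloor>"
    using no_int_between[OF s x, of "\<lfloor>x\<rfloor>"] no_int_between[OF x s, of "\<lfloor>x\<rfloor> + 1"]
    by (intro floor_unique) linarith+
  moreover have "x \<notin> \<int>"
    using False x by (auto elim!: Ints_cases)
  ultimately show ?thesis
    using False by (simp add: mu_CZ_def flip: s_def)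
qed

locale continuous_angle =
  fixes \<Psi> :: "real \<Rightarrow> real^2^2" and \<Theta> :: "real \<times> real \<Rightarrow> real"
  assumes continuous_on_\<Theta>: "continuous_on UNIV \<Theta>"
    and unitvec_\<Theta>: "\<And>t \<phi>. unitvec (\<Theta> (t, \<phi>)) = sgn (\<Psi> t *v unitvec \<phi>)"
    and \<Theta>_0: "\<And>\<phi>. \<Theta> (0, \<phi>) = \<phi>"
begin

lemma continuous_on_\<Theta>_compose [continuous_intros]:
  "continuous_on S f \<Longrightarrow> continuous_on S g \<Longrightarrow> continuous_on S (\<lambda>x. \<Theta> (f x, g x))"
  by (rule continuous_on_compose2[OF continuous_on_\<Theta>]) (auto intro: continuous_on_Pair)

lemma sgn_\<Psi>_mult:
  assumes "sgn v = unitvec \<phi>"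
  shows "sgn (\<Psi> t *v v) = unitvec (\<Theta> (t, \<phi>))"
proof -
  have "v \<noteq> 0"
    using assms by auto
  have "v = norm v *\<^sub>R unitvec \<phi>"
    using \<open>v \<noteq> 0\<close> by (simp flip: assms add: sgn_div_norm)
  then have "\<Psi> t *v v = norm v *\<^sub>R (\<Psi> t *v unitvec \<phi>)"
    by (metis matrix_vector_mult_scaleR)
  then show ?thesis
    using \<open>v \<noteq> 0\<close> by (simp add: sgn_scaleR unitvec_\<Theta>)
qed

lemma \<Psi>_mult_nonzero: "(v::real^2) \<noteq> 0 \<Longrightarrow> \<Psi> t *v v \<noteq> 0"
  by (metis sgn_eq_unitvec sgn_\<Psi>_mult sgn_zero unitvec_nonzero)

lemma \<Theta>_add_2pi_multiple: "\<Theta> (t, \<phi> + 2*pi * of_int m) = \<Theta> (t, \<phi>) + 2*pi * of_int m"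
  using continuous_angles_diff_constant[of UNIV "\<lambda>t. \<Theta> (t, \<phi> + 2*pi * of_int m)"
      "\<lambda>t. \<Theta> (t, \<phi>) + 2*pi * of_int m" t 0]
  by (simp add: continuous_intros unitvec_\<Theta> \<Theta>_0)

lemma inj_\<Theta>: "inj (\<lambda>\<phi>. \<Theta> (t, \<phi>))"
proof (rule injI)
  fix a b assume eq: "\<Theta> (t, a) = \<Theta> (t, b)"
  define x y where "x = \<Psi> t *v unitvec a" and "y = \<Psi> t *v unitvec b"
  define c where "c = norm x / norm y"
  have "x \<noteq> 0" "y \<noteq> 0"
    unfolding x_def y_def by (simp_all add: \<Psi>_mult_nonzero)
  have "sgn x = sgn y"
    by (metis eq unitvec_\<Theta> x_def y_def)
  have "x = norm x *\<^sub>R sgn x"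
    using \<open>x \<noteq> 0\<close> by (simp add: sgn_div_norm)
  also have "\<dots> = c *\<^sub>R y"
    unfolding \<open>sgn x = sgn y\<close> by (simp add: c_def sgn_div_norm divide_inverse)
  finally have "x = c *\<^sub>R y" .
  then have "\<Psi> t *v (unitvec a - c *\<^sub>R unitvec b) = 0"
    by (simp add: x_def y_def matrix_vector_mult_diff_distrib matrix_vector_mult_scaleR)
  then have "unitvec a = c *\<^sub>R unitvec b"
    using \<Psi>_mult_nonzero by (metis eq_iff_diff_eq_0)
  moreover have "c > 0"
    using \<open>x \<noteq> 0\<close> \<open>y \<noteq> 0\<close> by (simp add: c_def)
  ultimately have "unitvec a = unitvec b"
    by (metis sgn_scaleR sgn_pos scaleR_one sgn_unitvec)
  then obtain m :: int where "a = b + 2*pi*m"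
    by (auto simp: unitvec_eq_iff)
  moreover from this have "m = 0"
    using eq \<Theta>_add_2pi_multiple[of t b m] by simp
  ultimately show "a = b" by simp
qed

lemma strict_mono_\<Theta>: "strict_mono (\<lambda>\<phi>. \<Theta> (t, \<phi>))"
  by (rule continuous_inj_lift_imp_strict_mono[OF _ inj_\<Theta>])
     (auto intro: continuous_intros simp: \<Theta>_add_2pi_multiple[of t _ 1, simplified])

lemma \<Theta>_compose:
  assumes "\<And>t. \<Psi> (t + s) = \<Psi> t ** \<Psi> s"
  shows "\<Theta> (t + s, \<phi>) = \<Theta> (t, \<Theta> (s, \<phi>))"
proof -
  have "unitvec (\<Theta> (t + s, \<phi>)) = unitvec (\<Theta> (t, \<Theta> (s, \<phi>)))" for t
    using sgn_\<Psi>_mult[OF unitvec_\<Theta>[symmetric], of t s \<phi>]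
    by (simp add: unitvec_\<Theta> assms matrix_vector_mul_assoc)
  then show ?thesis
    using continuous_angles_diff_constant[of UNIV "\<lambda>t. \<Theta> (t + s, \<phi>)" "\<lambda>t. \<Theta> (t, \<Theta> (s, \<phi>))" t 0]
    by (simp add: continuous_intros \<Theta>_0)
qed

lemma \<Theta>_reflect:
  assumes "\<And>t. \<Psi> (- t) = Irefl ** \<Psi> t ** Irefl"
  shows "\<Theta> (- t, \<phi>) = - \<Theta> (t, - \<phi>)"
proof -
  have "\<Psi> (- t) *v unitvec \<phi> = Irefl *v (\<Psi> t *v unitvec (- \<phi>))" for t
    by (simp add: assms matrix_vector_mul_assoc matrix_mul_assoc flip: Irefl_unitvec)
  then have "unitvec (\<Theta> (- t, \<phi>)) = unitvec (- \<Theta> (t, - \<phi>))" for t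
    by (simp add: unitvec_\<Theta> sgn_Irefl flip: Irefl_unitvec)
  then show ?thesis
    using continuous_angles_diff_constant[of UNIV "\<lambda>t. \<Theta> (- t, \<phi>)" "\<lambda>t. - \<Theta> (t, - \<phi>)" t 0]
    by (simp add: continuous_intros \<Theta>_0)
qed

lemma angle_lift_\<Theta>:
  assumes "sgn v = unitvec \<phi>"
  shows "angle_lift \<Psi> v a b (\<lambda>t. \<Theta> (t, \<phi>))"
proof -
  have "v \<noteq> 0"
    using assms by auto
  then show ?thesis
    unfolding angle_lift_def
    by (auto intro!: continuous_intros
        simp: eq_norm_scaleR_unitvec_iff \<Psi>_mult_nonzero sgn_\<Psi>_mult[OF assms])
qed

lemma angle_lift_eq_\<Theta>:
  assumes lift: "angle_lift \<Psi> v a b \<theta>" and v: "sgn v = unitvec \<phi>" and "a \<le> b"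
  obtains m :: int where "\<And>t. t \<in> {a..b} \<Longrightarrow> \<theta> t = \<Theta> (t, \<phi>) + 2*pi*m"
proof -
  have "v \<noteq> 0"
    using v by auto
  then have same_direction: "unitvec (\<theta> t) = unitvec (\<Theta> (t, \<phi>))" if "t \<in> {a..b}" for t
    using lift that by (simp add: angle_lift_def eq_norm_scaleR_unitvec_iff \<Psi>_mult_nonzero sgn_\<Psi>_mult[OF v])
  obtain m :: int where m: "\<theta> a = \<Theta> (a, \<phi>) + 2*pi*m"
    using same_direction[of a] \<open>a \<le> b\<close> by (auto simp: unitvec_eq_iff)
  show ?thesis
  proof (rule that)
    fix t assume "t \<in> {a..b}"
    then have "\<theta> t - \<Theta> (t, \<phi>) = \<theta> a - \<Theta> (a, \<phi>)"
      using lift \<open>a \<le> b\<close>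
      by (intro continuous_angles_diff_constant[OF connected_Icc _ _ same_direction])
         (auto simp: angle_lift_def intro!: continuous_intros)
    then show "\<theta> t = \<Theta> (t, \<phi>) + 2*pi*m"
      using m by linarith
  qed
qed

lemma angle_change_eq:
  assumes "sgn v = unitvec \<phi>" "a \<le> b"
  shows "angle_change \<Psi> v a b = \<Theta> (b, \<phi>) - \<Theta> (a, \<phi>)"
  unfolding angle_change_def
proof (rule the_equality)
  show "\<exists>\<theta>. angle_lift \<Psi> v a b \<theta> \<and> \<Theta> (b, \<phi>) - \<Theta> (a, \<phi>) = \<theta> b - \<theta> a"
    using angle_lift_\<Theta>[OF assms(1)] by blast
next
  fix d assume "\<exists>\<theta>. angle_lift \<Psi> v a b \<theta> \<and> d = \<theta> b - \<theta> a"
  then obtain \<theta> where \<theta>: "angle_lift \<Psi> v a b \<theta>" "d = \<theta> b - \<theta> a"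
    by blast
  obtain m :: int where "\<And>t. t \<in> {a..b} \<Longrightarrow> \<theta> t = \<Theta> (t, \<phi>) + 2*pi*m"
    using angle_lift_eq_\<Theta>[OF \<theta>(1) assms] by blast
  then show "d = \<Theta> (b, \<phi>) - \<Theta> (a, \<phi>)"
    using \<theta>(2) assms(2) by simp
qed

lemma mu_RS_R_eq:
  assumes "0 \<le> b"
  shows "mu_RS_R \<Psi> 0 b = rs_step (\<Theta> (b, 0))"
proof -
  have "axis 1 1 = (unitvec 0 :: real^2)"
    by (simp add: vec2_eq_iff axis_def)
  then have axis: "sgn (axis 1 1 :: real^2) = unitvec 0"
    by simp
  show ?thesis
    unfolding mu_RS_R_def
  proof (rule the_equality)
    show "\<exists>\<theta>. angle_lift \<Psi> (axis 1 1) 0 b \<theta> \<and> rs_step (\<Theta> (b, 0)) = rs_step (\<theta> b) - rs_step (\<theta> 0)"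
      using angle_lift_\<Theta>[OF axis] by (intro exI[of _ "\<lambda>t. \<Theta> (t, 0)"]) (simp add: \<Theta>_0 rs_step_def)
  next
    fix r assume "\<exists>\<theta>. angle_lift \<Psi> (axis 1 1) 0 b \<theta> \<and> r = rs_step (\<theta> b) - rs_step (\<theta> 0)"
    then obtain \<theta> where "angle_lift \<Psi> (axis 1 1) 0 b \<theta>" "r = rs_step (\<theta> b) - rs_step (\<theta> 0)"
      by blast
    moreover obtain m :: int where "\<And>t. t \<in> {0..b} \<Longrightarrow> \<theta> t = \<Theta> (t, 0) + 2*pi*m"
      using angle_lift_eq_\<Theta>[OF calculation(1) axis assms] by blast
    ultimately show "r = rs_step (\<Theta> (b, 0))"
      using assms rs_step_add_2pi_multiple[of "\<Theta> (b, 0)" m] rs_step_add_2pi_multiple[of 0 m]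
      by (simp add: \<Theta>_0)
  qed
qed

lemma windings_eq:
  assumes "0 \<le> T"
  shows "windings \<Psi> T = range (\<lambda>\<phi>. (\<Theta> (T, \<phi>) - \<phi>) / (2*pi))"
proof (intro set_eqI iffI)
  fix w assume "w \<in> windings \<Psi> T"
  then obtain v where "v \<noteq> 0" "w = angle_change \<Psi> v 0 T / (2*pi)"
    by (auto simp: windings_def)
  moreover obtain \<phi> where "sgn v = unitvec \<phi>"
    using sgn_eq_unitvec[OF \<open>v \<noteq> 0\<close>] .
  ultimately show "w \<in> range (\<lambda>\<phi>. (\<Theta> (T, \<phi>) - \<phi>) / (2*pi))"
    using assms by (simp add: angle_change_eq \<Theta>_0)
next
  fix w assume "w \<in> range (\<lambda>\<phi>. (\<Theta> (T, \<phi>) - \<phi>) / (2*pi))"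
  then obtain \<phi> where "w = angle_change \<Psi> (unitvec \<phi>) 0 T / (2*pi)"
    using assms by (auto simp: angle_change_eq \<Theta>_0)
  then show "w \<in> windings \<Psi> T"
    unfolding windings_def by auto
qed

lemma connected_windings: "0 \<le> T \<Longrightarrow> connected (windings \<Psi> T)"
  by (auto simp: windings_eq intro!: connected_continuous_image continuous_intros)

lemma windings_close:
  assumes "0 \<le> T" "x \<in> windings \<Psi> T" "y \<in> windings \<Psi> T"
  shows "\<bar>x - y\<bar> < 1"
proof -
  obtain a b where "x = (\<Theta> (T, a) - a) / (2*pi)" "y = (\<Theta> (T, b) - b) / (2*pi)"
    using assms by (auto simp: windings_eq)
  then have "\<bar>x - y\<bar> = \<bar>(\<Theta> (T, a) - a) - (\<Theta> (T, b) - b)\<bar> / (2*pi)"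
    by (simp add: abs_divide flip: diff_divide_distrib)
  also have "\<dots> < 1"
    using lift_displacement_diff_less[OF strict_mono_\<Theta> \<Theta>_add_2pi_multiple] by simp
  finally show ?thesis .
qed

lemma \<Theta>_half_period_odd:
  assumes "\<And>t. \<Psi> (t + T) = \<Psi> t ** \<Psi> T" "\<And>t. \<Psi> (- t) = Irefl ** \<Psi> t ** Irefl"
  shows "\<Theta> (T/2, - \<Theta> (T, 0)) = - \<Theta> (T/2, 0)"
proof -
  have "\<Theta> (T/2, 0) = \<Theta> (- (T/2) + T, 0)"
    by simp
  also have "\<dots> = - \<Theta> (T/2, - \<Theta> (T, 0))"
    by (simp only: \<Theta>_compose[OF assms(1)] \<Theta>_reflect[OF assms(2)])
  finally show ?thesis by simp
qed

end

lemma continuous_polar_angle_exists: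
  fixes x :: "'a::real_normed_vector \<Rightarrow> real^2"
  assumes "continuous_on S x" "contractible S" "\<And>p. p \<in> S \<Longrightarrow> x p \<noteq> 0"
  obtains \<theta> where "continuous_on S \<theta>" "\<And>p. p \<in> S \<Longrightarrow> unitvec (\<theta> p) = sgn (x p)"
proof -
  define z where "z p = Complex (x p $ 1) (x p $ 2)" for p
  have "continuous_on S z"
    unfolding z_def Complex_eq by (intro continuous_intros assms(1))
  moreover have "z p \<noteq> 0" if "p \<in> S" for p
    using assms(3)[OF that] by (simp add: z_def complex_eq_iff vec2_eq_iff)
  ultimately obtain g where g: "continuous_on S g" "\<And>p. p \<in> S \<Longrightarrow> z p = exp (g p)"
    using continuous_logarithm_on_contractible[OF _ assms(2)] by metis
  show ?thesis
  proof (rule that[of "\<lambda>p. Im (g p)"])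
    show "continuous_on S (\<lambda>p. Im (g p))"
      by (intro continuous_intros g(1))
    fix p assume "p \<in> S"
    then have "x p = exp (Re (g p)) *\<^sub>R unitvec (Im (g p))"
      using arg_cong[OF g(2), of p Re] arg_cong[OF g(2), of p Im]
      by (simp add: vec2_eq_iff z_def Re_exp Im_exp)
    then show "unitvec (Im (g p)) = sgn (x p)"
      by (simp add: sgn_scaleR)
  qed
qed

lemma continuous_angle_exists:
  fixes \<Psi> :: "real \<Rightarrow> real^2^2"
  assumes cont: "\<And>i j. continuous_on UNIV (\<lambda>t. \<Psi> t $ i $ j)"
    and det: "\<And>t. det (\<Psi> t) \<noteq> 0" and id: "\<Psi> 0 = mat 1"
  obtains \<Theta> where "continuous_angle \<Psi> \<Theta>"
proof -
  define x where "x p = \<Psi> (fst p) *v unitvec (snd p)" for p :: "real \<times> real"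
  have x_nth: "x p $ i = \<Psi> (fst p) $ i $ 1 * cos (snd p) + \<Psi> (fst p) $ i $ 2 * sin (snd p)" for p i
    by (simp add: x_def matrix_vector_mult_def sum_2)
  have entries: "continuous_on UNIV (\<lambda>p. \<Psi> (fst p) $ i $ j)" for i j
    by (rule continuous_on_compose2[OF cont continuous_on_fst]) auto
  moreover have "continuous_on UNIV (\<lambda>p::real \<times> real. cos (snd p))"
    "continuous_on UNIV (\<lambda>p::real \<times> real. sin (snd p))"
    by (intro continuous_intros)+
  ultimately have "continuous_on UNIV (\<lambda>p. x p $ i)" for i
    unfolding x_nth by (intro continuous_on_add continuous_on_mult)
  then have "continuous_on UNIV x"
    using continuous_on_vec_lambda[of UNIV "\<lambda>i p. x p $ i"] by simp
  moreover have "x p \<noteq> 0" for p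
  proof -
    have "\<exists>B. B ** \<Psi> (fst p) = mat 1"
      using invertible_det_nz[of "\<Psi> (fst p)"] det unfolding invertible_def by blast
    then show ?thesis
      unfolding x_def matrix_left_invertible_ker using unitvec_nonzero by blast
  qed
  ultimately obtain \<Theta>\<^sub>0 where \<Theta>\<^sub>0: "continuous_on UNIV \<Theta>\<^sub>0"
    and "\<And>p. unitvec (\<Theta>\<^sub>0 p) = sgn (x p)"
    by (rule continuous_polar_angle_exists[OF _ contractible_UNIV]) auto
  then have direction: "unitvec (\<Theta>\<^sub>0 (t, \<phi>)) = sgn (\<Psi> t *v unitvec \<phi>)" for t \<phi>
    by (simp add: x_def)
  define c where "c = \<Theta>\<^sub>0 (0, 0)"
  have "\<Theta>\<^sub>0 (0, \<phi>) - \<phi> = c" for \<phi>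
    using continuous_angles_diff_constant[of UNIV "\<lambda>\<phi>. \<Theta>\<^sub>0 (0, \<phi>)" "\<lambda>\<phi>. \<phi>" \<phi> 0]
      continuous_on_compose2[OF \<Theta>\<^sub>0, of UNIV "\<lambda>\<phi>. (0, \<phi>)"]
    by (simp add: c_def direction id continuous_on_Pair)
  then have initial: "\<Theta>\<^sub>0 (0, \<phi>) - c = \<phi>" for \<phi>
    by (metis add_diff_cancel_left' diff_add_cancel)
  obtain m :: int where "c = 2*pi*m"
    using direction[of 0 0] by (auto simp: c_def id unitvec_eq_iff)
  then have "unitvec (\<Theta>\<^sub>0 p - c) = unitvec (\<Theta>\<^sub>0 p)" for p
    by (metis diff_add_cancel unitvec_add_2pi_multiple)
  then have "continuous_angle \<Psi> (\<lambda>p. \<Theta>\<^sub>0 p - c)"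
    using initial by unfold_locales (auto intro!: continuous_intros \<Theta>\<^sub>0 simp: direction)
  then show ?thesis ..
qed

theorem proposition3p5:
  fixes \<Psi> :: "real \<Rightarrow> real^2^2" and T :: real
  assumes "T > 0"
    and "smooth_matrix_path \<Psi>"
    and "\<forall>t. symplectic2 (\<Psi> t)"
    and "\<Psi> 0 = mat 1"
    and "\<forall>t. \<Psi> (t + T) = \<Psi> t ** \<Psi> T"
    and "\<forall>t. \<Psi> (- t) = Irefl ** \<Psi> t ** Irefl"
    and "det (\<Psi> T - mat 1) \<noteq> 0"
  shows "\<bar>real_of_int (mu_CZ \<Psi> T) - 2 * mu_RS_R \<Psi> 0 (T / 2)\<bar> \<le> 1
         \<and> (mu_CZ \<Psi> T \<ge> 3 \<longrightarrow> mu_RS_R \<Psi> 0 (T / 2) \<ge> 3 / 2)"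
proof -
  \<comment> \<open>Only continuity and invertibility of Psi(t) are used.\<close>
  have "continuous_on UNIV (\<lambda>t. \<Psi> t $ i $ j)" for i j
    using assms(2) DERIV_isCont unfolding smooth_matrix_path_def smooth_fun_def
    by (metis continuous_at_imp_continuous_on)
  moreover have "det (\<Psi> t) \<noteq> 0" for t
    using assms(3) det_symplectic2 by simp
  ultimately obtain \<Theta> where "continuous_angle \<Psi> \<Theta>"
    using continuous_angle_exists assms(4) by blast
  then interpret continuous_angle \<Psi> \<Theta> .
  define x where "x = \<Theta> (T, 0) / (2*pi)"
  have x: "x \<in> windings \<Psi> T"
    using rangeI[of "\<lambda>\<phi>. (\<Theta> (T, \<phi>) - \<phi>) / (2*pi)" 0] assms(1) by (simp add: windings_eq x_def)
  have "\<Theta> (T/2, - \<Theta> (T, 0)) = - \<Theta> (T/2, 0)"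
    using assms(5,6) by (simp add: \<Theta>_half_period_odd)
  then have "mu_RS_R \<Psi> 0 (T/2) = (\<lfloor>x\<rfloor> + \<lceil>x\<rceil>) / 2"
    using rs_step_odd_lift[OF strict_mono_\<Theta> \<Theta>_add_2pi_multiple] assms(1)
    by (simp add: mu_RS_R_eq x_def)
  moreover have "x \<notin> \<int> \<Longrightarrow> \<lceil>x\<rceil> = \<lfloor>x\<rfloor> + 1"
    by (metis Ints_of_int ceiling_altdef)
  moreover have "0 \<le> T"
    using assms(1) by simp
  note mu_CZ_cases[OF connected_windings[OF this] windings_close[OF this] x]
  ultimately show ?thesis
    by (auto elim!: Ints_cases simp del: one_le_floor)
qed

end
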